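(* Let $N\in\mathbb{N}$ with $N\ge3$, $1\le m\le N+1$ an integer, and $n\in\mathbb{N}$ with $n>\frac{N+5}{96}$. Then there is a real $E$ with $|E|\le E^{[1]}_N n^{-\frac{N+2}{2}}$ such that \[ \lambda(n)^{-2m}=\frac{3^{m/2}}{\pi^m}\left(\sum_{\ell=0}^{R_N(m)}\binom{-\frac m2}{\ell}24^{-\ell}n^{-\ell-\frac m2}+E\right). \]
   Context: $\lambda(n):=\sqrt{\frac{\pi}{6\sqrt2}\sqrt{24n+1}}$; $R_N(m):=\lfloor\frac{N+1-m}{2}\rfloor$; $E^{[1]}_N:=\max_{1\le m\le N+1}\left|\binom{-m/2}{R_N(m)+1}\right|24^{-R_N(m)-1}$. *)

theory Defs
  imports "HOL-Analysis.Analysis"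
begin

definition lam :: "nat \<Rightarrow> real" where
  "lam n = sqrt (pi / (6 * sqrt 2) * sqrt (24 * real n + 1))"

definition RN :: "nat \<Rightarrow> int \<Rightarrow> int" where
  "RN N m = \<lfloor>(real N + 1 - real_of_int m) / 2\<rfloor>"

definition E1 :: "nat \<Rightarrow> real" where
  "E1 N = Max ((\<lambda>m::int. \<bar>(- real_of_int m / 2) gchoose (nat (RN N m + 1))\<bar>
                  * 24 powi (- (RN N m + 1))) ` {1 .. int N + 1})"

end

theory Submission imports Defs begin

(* Since \<lambda>(n)^2 = \<pi>/\<surd>3 \<cdot> (n + 1/24)^(1/2), we have
   \<lambda>(n)^(-2m) = 3^(m/2) \<pi>^(-m) (n + 1/24)^(-m/2).  Expanding
   (n + 1/24)^(-m/2) = n^(-m/2) (1 + 1/(24n))^(-m/2) by Taylor's theorem with Lagrange remainder,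
   the Lagrange term is bounded by the first omitted term of the series, since the exponent
   -m/2 - R_N(m) - 1 it carries is negative; R_N(m) is chosen so that this term decays like n^(-(N+2)/2). *)

lemma one_plus_powr_taylor:
  fixes a h :: real and K :: nat
  assumes h: "0 < h" and a: "a \<le> real (Suc K)"
  shows "\<exists>r. \<bar>r\<bar> \<le> \<bar>a gchoose Suc K\<bar> * h ^ Suc K \<and>
     (1 + h) powr a = (\<Sum>l = 0..K. (a gchoose l) * h ^ l) + r"
proof -
  define diff where
    "diff k t = (\<Prod>i=0..<k. a - of_nat i) * (1 + t) powr (a - of_nat k)" for k :: nat and t :: real
  have diff_div_fact: "diff k t / fact k = (a gchoose k) * (1 + t) powr (a - of_nat k)" for k t
    by (simp add: diff_def gbinomial_prod_rev)
  have "DERIV (diff k) t :> diff (Suc k) t" if "0 \<le> t" for k t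
  proof -
    have "DERIV (\<lambda>t. (1 + t) powr (a - of_nat k)) t :> (a - of_nat k) * (1 + t) powr (a - of_nat k - 1)"
      using that by (auto intro!: derivative_eq_intros)
    from DERIV_cmult[OF this, of "\<Prod>i=0..<k. a - of_nat i"] show ?thesis
      unfolding diff_def by (simp add: prod.atLeast0_lessThan_Suc algebra_simps)
  qed
  \<comment> \<open>Lagrange remainder; \<open>a \<le> Suc K\<close> makes the factor \<open>(1 + t) powr (a - Suc K)\<close> at most 1.\<close>
  then obtain t where t: "0 < t"
    and taylor: "(1 + h) powr a = (\<Sum>k<Suc K. diff k 0 / fact k * h ^ k) + diff (Suc K) t / fact (Suc K) * h ^ Suc K"
    using Maclaurin[OF h, of "Suc K" diff "\<lambda>t. (1 + t) powr a"] by (auto simp: diff_def fun_eq_iff)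
  have "(1 + t) powr (a - of_nat (Suc K)) \<le> (1 + t) powr 0"
    using t a by (intro powr_mono) auto
  with t have "(1 + t) powr (a - of_nat (Suc K)) \<le> 1"
    by simp
  then have "\<bar>diff (Suc K) t / fact (Suc K) * h ^ Suc K\<bar> \<le> \<bar>a gchoose Suc K\<bar> * h ^ Suc K"
    using h unfolding diff_div_fact abs_mult
    by (simp add: mult_left_le mult.assoc mult_left_mono)
  moreover have "(\<Sum>k<Suc K. diff k 0 / fact k * h ^ k) = (\<Sum>l = 0..K. (a gchoose l) * h ^ l)"
    by (simp add: diff_div_fact atLeast0AtMost lessThan_Suc_atMost)
  ultimately show ?thesis using taylor by auto
qed

lemma powr_add_taylor:
  fixes a b x :: real and K :: nat
  assumes x: "0 < x" and b: "0 < b" and a: "a \<le> real (Suc K)"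
  shows "\<exists>r. \<bar>r\<bar> \<le> \<bar>a gchoose Suc K\<bar> * b ^ Suc K * x powr (a - real (Suc K)) \<and>
     (x + b) powr a = (\<Sum>l = 0..K. (a gchoose l) * b ^ l * x powr (a - real l)) + r"
proof -
  have scale: "x powr a * (b / x) ^ l = b ^ l * x powr (a - real l)" for l
    using x by (simp add: powr_diff powr_realpow power_divide)
  obtain r where r: "\<bar>r\<bar> \<le> \<bar>a gchoose Suc K\<bar> * (b / x) ^ Suc K"
    and expansion: "(1 + b / x) powr a = (\<Sum>l = 0..K. (a gchoose l) * (b / x) ^ l) + r"
    using one_plus_powr_taylor[of "b / x" a K] x b a by auto
  have "(x + b) powr a = x powr a * (1 + b / x) powr a"
    using x b by (simp add: powr_mult[symmetric] distrib_left)
  also have "\<dots> = (\<Sum>l = 0..K. (a gchoose l) * b ^ l * x powr (a - real l)) + x powr a * r"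
    unfolding expansion distrib_left sum_distrib_left
    by (simp add: scale[symmetric] mult_ac)
  finally have "(x + b) powr a = (\<Sum>l = 0..K. (a gchoose l) * b ^ l * x powr (a - real l)) + x powr a * r" .
  moreover have "\<bar>x powr a * r\<bar> \<le> x powr a * (\<bar>a gchoose Suc K\<bar> * (b / x) ^ Suc K)"
    using mult_left_mono[OF r, of "x powr a"] by (simp add: abs_mult)
  then have "\<bar>x powr a * r\<bar> \<le> \<bar>a gchoose Suc K\<bar> * b ^ Suc K * x powr (a - real (Suc K))"
    by (simp only: scale mult.left_commute[of "x powr a"] mult.assoc)
  ultimately show ?thesis by blast
qed

lemma lam_squared: "lam n ^ 2 = pi / sqrt 3 * sqrt (real n + 1 / 24)"
proof -
  have "sqrt (24 * real n + 1) = sqrt 72 * sqrt ((real n + 1 / 24) / 3)"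
    by (simp add: real_sqrt_mult[symmetric] field_simps)
  moreover have "sqrt 72 = 6 * sqrt 2"
    using real_sqrt_mult[of 36 2] by simp
  moreover have "lam n ^ 2 = pi / (6 * sqrt 2) * sqrt (24 * real n + 1)"
    by (simp add: lam_def)
  ultimately show ?thesis
    by (simp add: real_sqrt_divide)
qed

lemma lam_powi_neg_double:
  fixes m :: int
  shows "lam n powi (- 2 * m) = 3 powr (real_of_int m / 2) / pi powi m * (real n + 1 / 24) powr (- real_of_int m / 2)"
proof -
  have "lam n powi (- 2 * m) = (pi / sqrt 3 * sqrt (real n + 1 / 24)) powi (- m)"
    using power_int_mult[of "lam n" 2 "- m"] by (simp add: lam_squared)
  also have "\<dots> = (pi / sqrt 3 * sqrt (real n + 1 / 24)) powr (- real_of_int m)"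
    by (subst powr_real_of_int'[of _ "- m", simplified]) auto
  also have "\<dots> = sqrt 3 powr real_of_int m / pi powr real_of_int m * sqrt (real n + 1 / 24) powr (- real_of_int m)"
    by (simp add: powr_mult powr_divide powr_minus divide_simps)
  also have "\<dots> = 3 powr (real_of_int m / 2) / pi powi m * (real n + 1 / 24) powr (- real_of_int m / 2)"
    by (simp add: powr_half_sqrt[symmetric] powr_powr powr_real_of_int')
  finally show ?thesis .
qed

lemma lam_powi_neg_double_expansion:
  fixes m :: int and n K :: nat
  assumes n: "0 < n" and m: "0 \<le> m"
  shows "\<exists>r. \<bar>r\<bar> \<le> \<bar>(- real_of_int m / 2) gchoose Suc K\<bar> * (1 / 24) ^ Suc K
                  * real n powr (- real_of_int m / 2 - real (Suc K)) \<and>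
    lam n powi (- 2 * m) = 3 powr (real_of_int m / 2) / pi powi m *
      ((\<Sum>l = 0..K. ((- real_of_int m / 2) gchoose l) * 24 powi (- int l)
          * real n powr (- real l - real_of_int m / 2)) + r)"
proof -
  define a where "a = - real_of_int m / 2"
  have "a \<le> real (Suc K)"
    using m by (simp add: a_def)
  then obtain r where r: "\<bar>r\<bar> \<le> \<bar>a gchoose Suc K\<bar> * (1 / 24) ^ Suc K * real n powr (a - real (Suc K))"
    and expansion: "(real n + 1 / 24) powr a = (\<Sum>l = 0..K. (a gchoose l) * (1 / 24) ^ l * real n powr (a - real l)) + r"
    using powr_add_taylor[of "real n" "1 / 24" a K] n by auto
  have "(a gchoose l) * (1 / 24) ^ l * real n powr (a - real l) =
      (a gchoose l) * 24 powi (- int l) * real n powr (- real l - real_of_int m / 2)" for l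
  proof -
    have "a - real l = - real l - real_of_int m / 2"
      by (simp add: a_def)
    moreover have "(1 / 24) ^ l = (24::real) powi (- int l)"
      by (simp add: power_int_minus power_one_over inverse_eq_divide)
    ultimately show ?thesis
      by (simp only:)
  qed
  then have "lam n powi (- 2 * m) = 3 powr (real_of_int m / 2) / pi powi m *
      ((\<Sum>l = 0..K. (a gchoose l) * 24 powi (- int l) * real n powr (- real l - real_of_int m / 2)) + r)"
    using expansion lam_powi_neg_double[of n m] unfolding a_def[symmetric] by (simp only:)
  with r show ?thesis
    unfolding a_def by blast
qed

lemma RN_nonneg: "m \<le> int N + 1 \<Longrightarrow> 0 \<le> RN N m"
  unfolding RN_def by simp

lemma RN_lower_bound: "real N - real_of_int m \<le> 2 * real_of_int (RN N m)"
proof -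
  have "(real N + 1 - real_of_int m) / 2 < real_of_int (RN N m) + 1"
    unfolding RN_def by linarith
  then have "real_of_int (int N - m) < real_of_int (2 * RN N m + 1)"
    by simp
  then have "int N - m < 2 * RN N m + 1"
    by (simp only: of_int_less_iff)
  then show ?thesis
    by linarith
qed

lemma remainder_coefficient_le_E1:
  fixes N :: nat and m :: int
  assumes "1 \<le> m" "m \<le> int N + 1"
  shows "\<bar>(- real_of_int m / 2) gchoose Suc (nat (RN N m))\<bar> * (1 / 24) ^ Suc (nat (RN N m)) \<le> E1 N"
proof -
  have index: "nat (RN N m + 1) = Suc (nat (RN N m))" and exponent: "- (RN N m + 1) = - int (Suc (nat (RN N m)))"
    using RN_nonneg[OF assms(2)] by auto
  have power: "(24::real) powi (- (RN N m + 1)) = (1 / 24) ^ Suc (nat (RN N m))"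
    unfolding exponent power_int_minus power_int_of_nat by (simp only: power_one_over inverse_eq_divide)
  have "\<bar>(- real_of_int m / 2) gchoose (nat (RN N m + 1))\<bar> * 24 powi (- (RN N m + 1)) \<le> E1 N"
    unfolding E1_def using assms by (intro Max_ge) auto
  then show ?thesis
    unfolding index power .
qed

theorem lemma3p15:
  fixes N n :: nat and m :: int
  assumes "N \<ge> 3" and "1 \<le> m" and "m \<le> int N + 1"
    and "real n > (real N + 5) / 96"
  shows "\<exists>E::real. \<bar>E\<bar> \<le> E1 N * real n powr (- (real N + 2) / 2) \<and>
    lam n powi (- 2 * m) =
      3 powr (real_of_int m / 2) / pi powi m *
      ((\<Sum>l = 0..nat (RN N m). ((- real_of_int m / 2) gchoose l) * 24 powi (- int l)
          * real n powr (- real l - real_of_int m / 2)) + E)"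
proof -
  define R where "R = nat (RN N m)"
  have n: "1 \<le> real n"
    using assms(4) by (cases n) auto
  obtain r where r: "\<bar>r\<bar> \<le> \<bar>(- real_of_int m / 2) gchoose Suc R\<bar> * (1 / 24) ^ Suc R
                          * real n powr (- real_of_int m / 2 - real (Suc R))"
    and expansion: "lam n powi (- 2 * m) = 3 powr (real_of_int m / 2) / pi powi m *
      ((\<Sum>l = 0..R. ((- real_of_int m / 2) gchoose l) * 24 powi (- int l)
          * real n powr (- real l - real_of_int m / 2)) + r)"
    using lam_powi_neg_double_expansion[of n m R] n assms(2) by auto
  have "- real_of_int m / 2 - real (Suc R) \<le> - (real N + 2) / 2"
    using RN_lower_bound[of N m] RN_nonneg[OF assms(3)] by (simp add: R_def)
  then have decay: "real n powr (- real_of_int m / 2 - real (Suc R)) \<le> real n powr (- (real N + 2) / 2)"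
    using n by (rule powr_mono)
  have coefficient: "\<bar>(- real_of_int m / 2) gchoose Suc R\<bar> * (1 / 24) ^ Suc R \<le> E1 N"
    using remainder_coefficient_le_E1[OF assms(2,3)] by (simp only: R_def)
  moreover have "0 \<le> E1 N"
    by (rule order_trans[OF _ coefficient]) simp
  ultimately have "\<bar>r\<bar> \<le> E1 N * real n powr (- (real N + 2) / 2)"
    using r decay by (meson order_trans mult_mono powr_ge_zero)
  with expansion show ?thesis
    unfolding R_def by blast
qed

end
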